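(* For every instance, $$\mathrm{opt}_D\text{-}\mathrm{EEP}=\mathrm{opt}\text{-}\mathrm{SUM},\qquad \mathrm{opt}_D\text{-}\mathrm{EMP}\ \ge\ 2\,\mathrm{opt}\text{-}\mathrm{SUM}-1,\qquad \mathrm{opt}_D\text{-}\mathrm{WMP}\ \ge\ 2\,\mathrm{opt}\text{-}\mathrm{MAX}-1.$$
   Context: An instance consists of a finite set $E$ of $n$ elements with nonnegative weights $(p_e)_{e\in E}$, and $m$ tests; test $i\in[m]$ is a subset $s_i\subseteq E$. For SUM objectives (EMP, EEP) weights satisfy $\sum_e p_e=1$; for MAX objectives (WMP, WEP) they satisfy $\max_e p_e=1$. A schedule is an infinite sequence $\sigma_1,\sigma_2,\dots\in[m]$ of tests; deterministic schedules are fixed sequences, stochastic schedules generate the sequence randomly with the distribution of $\sigma_t$ possibly depending on $\sigma_1,\dots,\sigma_{t-1}$. Detection time $T(e,t)=\mathbb{E}\big[1+\min\{h\ge 0: e\in s_{\sigma_{t+h}}\}\big]$, $M_t[e]=\sup_{t\ge1}T(e,t)$, $E_t[e]=\lim_{H\to\infty}\frac1H\sum_{t=1}^H T(e,t)$. A schedule is valid if for every $e$, $M_t[e]$ is finite and $E_t[e]$ exists, and for every test $i$ the limit $\lim_H\frac1H\sum_{t\le H}\Pr[\sigma_t=i]$ exists. $\mathrm{EMP}=\sum_e p_eM_t[e]$, $\mathrm{EEP}=\sum_e p_eE_t[e]$, $\mathrm{WMP}=\sup_{e,t}p_eT(e,t)$, $\mathrm{WEP}=\max_e p_eE_t[e]$.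 $\mathrm{opt}_D\text{-}X$ is the infimum of $X$ over valid deterministic schedules; $\mathrm{opt}\text{-}\mathrm{SUM}$ is the infimum of EEP and $\mathrm{opt}\text{-}\mathrm{MAX}$ the infimum of WEP over valid stochastic schedules. *)

theory Defs
  imports "HOL-Probability.Probability"
begin

text \<open>Schedules are sequences indexed from 0 (paper index t corresponds to t-1 here).
  Tests are indexed by 0..<m; a test index i has test set s i.\<close>

definition detect :: "(nat \<Rightarrow> 'e set) \<Rightarrow> 'e \<Rightarrow> (nat \<Rightarrow> nat) \<Rightarrow> nat \<Rightarrow> ennreal" where
  "detect s e \<sigma> t =
     (if \<exists>h. e \<in> s (\<sigma> (t + h)) then of_nat (Suc (LEAST h. e \<in> s (\<sigma> (t + h)))) else \<infinity>)"

text \<open>Generic quantities, given detection times D e t = T(e,t) and test frequencies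
  F i t = Pr[sigma_t = i].\<close>
definition Mt :: "('e \<Rightarrow> nat \<Rightarrow> ennreal) \<Rightarrow> 'e \<Rightarrow> ennreal" where
  "Mt D e = (SUP t. D e t)"

definition Et :: "('e \<Rightarrow> nat \<Rightarrow> ennreal) \<Rightarrow> 'e \<Rightarrow> real" where
  "Et D e = lim (\<lambda>H. (\<Sum>t<H. enn2real (D e t)) / real H)"

definition valid_gen :: "'e set \<Rightarrow> nat \<Rightarrow> ('e \<Rightarrow> nat \<Rightarrow> ennreal) \<Rightarrow> (nat \<Rightarrow> nat \<Rightarrow> real) \<Rightarrow> bool" where
  "valid_gen E m D F \<longleftrightarrow>
     (\<forall>e\<in>E. Mt D e < \<infinity> \<and> convergent (\<lambda>H. (\<Sum>t<H. enn2real (D e t)) / real H)) \<and>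
     (\<forall>i<m. convergent (\<lambda>H. (\<Sum>t<H. F i t) / real H))"

definition EMP :: "'e set \<Rightarrow> ('e \<Rightarrow> real) \<Rightarrow> ('e \<Rightarrow> nat \<Rightarrow> ennreal) \<Rightarrow> real" where
  "EMP E p D = (\<Sum>e\<in>E. p e * enn2real (Mt D e))"

definition EEP :: "'e set \<Rightarrow> ('e \<Rightarrow> real) \<Rightarrow> ('e \<Rightarrow> nat \<Rightarrow> ennreal) \<Rightarrow> real" where
  "EEP E p D = (\<Sum>e\<in>E. p e * Et D e)"

definition WMP :: "'e set \<Rightarrow> ('e \<Rightarrow> real) \<Rightarrow> ('e \<Rightarrow> nat \<Rightarrow> ennreal) \<Rightarrow> real" where
  "WMP E p D = (SUP et \<in> E \<times> (UNIV :: nat set). p (fst et) * enn2real (D (fst et) (snd et)))"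

definition WEP :: "'e set \<Rightarrow> ('e \<Rightarrow> real) \<Rightarrow> ('e \<Rightarrow> nat \<Rightarrow> ennreal) \<Rightarrow> real" where
  "WEP E p D = Max ((\<lambda>e. p e * Et D e) ` E)"

definition det_D :: "(nat \<Rightarrow> 'e set) \<Rightarrow> (nat \<Rightarrow> nat) \<Rightarrow> 'e \<Rightarrow> nat \<Rightarrow> ennreal" where
  "det_D s \<sigma> = (\<lambda>e t. detect s e \<sigma> t)"

definition det_F :: "(nat \<Rightarrow> nat) \<Rightarrow> nat \<Rightarrow> nat \<Rightarrow> real" where
  "det_F \<sigma> = (\<lambda>i t. if \<sigma> t = i then 1 else 0)"

definition valid_det :: "'e set \<Rightarrow> nat \<Rightarrow> (nat \<Rightarrow> 'e set) \<Rightarrow> (nat \<Rightarrow> nat) \<Rightarrow> bool" where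
  "valid_det E m s \<sigma> \<longleftrightarrow> (\<forall>t. \<sigma> t < m) \<and> valid_gen E m (det_D s \<sigma>) (det_F \<sigma>)"

definition sched_space :: "nat \<Rightarrow> (nat \<Rightarrow> nat) measure" where
  "sched_space m = Pi\<^sub>M UNIV (\<lambda>_. count_space {..<m})"

definition sto_D :: "(nat \<Rightarrow> 'e set) \<Rightarrow> (nat \<Rightarrow> nat) measure \<Rightarrow> 'e \<Rightarrow> nat \<Rightarrow> ennreal" where
  "sto_D s M = (\<lambda>e t. \<integral>\<^sup>+ \<sigma>. detect s e \<sigma> t \<partial>M)"

definition sto_F :: "(nat \<Rightarrow> nat) measure \<Rightarrow> nat \<Rightarrow> nat \<Rightarrow> real" where
  "sto_F M = (\<lambda>i t. measure M {\<sigma> \<in> space M. \<sigma> t = i})"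

definition valid_sto :: "'e set \<Rightarrow> nat \<Rightarrow> (nat \<Rightarrow> 'e set) \<Rightarrow> (nat \<Rightarrow> nat) measure \<Rightarrow> bool" where
  "valid_sto E m s M \<longleftrightarrow> prob_space M \<and> sets M = sets (sched_space m) \<and>
     valid_gen E m (sto_D s M) (sto_F M)"

text \<open>Optima (infima, in the extended reals; the infimum of the empty set is \<infinity>).\<close>
definition optD :: "('e set \<Rightarrow> ('e \<Rightarrow> real) \<Rightarrow> ('e \<Rightarrow> nat \<Rightarrow> ennreal) \<Rightarrow> real)
     \<Rightarrow> 'e set \<Rightarrow> nat \<Rightarrow> (nat \<Rightarrow> 'e set) \<Rightarrow> ('e \<Rightarrow> real) \<Rightarrow> ereal" where
  "optD X E m s p = (INF \<sigma> \<in> {\<sigma>. valid_det E m s \<sigma>}. ereal (X E p (det_D s \<sigma>)))"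

definition opt_SUM :: "'e set \<Rightarrow> nat \<Rightarrow> (nat \<Rightarrow> 'e set) \<Rightarrow> ('e \<Rightarrow> real) \<Rightarrow> ereal" where
  "opt_SUM E m s p = (INF M \<in> {M. valid_sto E m s M}. ereal (EEP E p (sto_D s M)))"

definition opt_MAX :: "'e set \<Rightarrow> nat \<Rightarrow> (nat \<Rightarrow> 'e set) \<Rightarrow> ('e \<Rightarrow> real) \<Rightarrow> ereal" where
  "opt_MAX E m s p = (INF M \<in> {M. valid_sto E m s M}. ereal (WEP E p (sto_D s M)))"

end

theory Submission
  imports Defs
begin

text \<open>
  A deterministic schedule is a stochastic schedule concentrated on one sequence, so
  opt-SUM \<le> optD-EEP and opt-MAX \<le> optD-WEP. Along a fixed sequence the detection time of an
  element drops by one per step until the element is tested, where it is 1; such a countdown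
  bounded by G has long-run average at most (G + 1)/2. Hence 2 EEP \<le> EMP + 1 and
  2 WEP \<le> WMP + 1 for every deterministic schedule, which gives both inequalities.

  For optD-EEP \<le> opt-SUM, fix a stochastic schedule and parameters K and H. Some sample \<sigma>
  has weighted detection times over the first H steps at most their expectation plus 1.
  Repeating the first H tests of \<sigma> followed by one sweep through all m tests gives a periodic
  deterministic schedule. The sweep delays detection by at most m; outside the last mK steps
  before a sweep this is at most a 1/K fraction of the delay under \<sigma>. Letting H \<rightarrow> \<infinity> and then
  K \<rightarrow> \<infinity> proves the claim.
\<close>

section \<open>Detection times along a fixed sequence\<close>

lemma detect_le_Suc:
  assumes "e \<in> s (\<sigma> (t + h))"
  shows "detect s e \<sigma> t \<le> of_nat (Suc h)"
proof -
  have "(LEAST h. e \<in> s (\<sigma> (t + h))) \<le> h" using assms by (rule Least_le)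
  then show ?thesis using assms unfolding detect_def by auto
qed

lemma Suc_le_detect:
  assumes "\<And>h. h < k \<Longrightarrow> e \<notin> s (\<sigma> (t + h))"
  shows "of_nat (Suc k) \<le> detect s e \<sigma> t"
proof (cases "\<exists>h. e \<in> s (\<sigma> (t + h))")
  case True
  then have "e \<in> s (\<sigma> (t + (LEAST h. e \<in> s (\<sigma> (t + h)))))" by (metis LeastI)
  then have "k \<le> (LEAST h. e \<in> s (\<sigma> (t + h)))" using assms not_le by blast
  then show ?thesis using True unfolding detect_def by auto
qed (simp add: detect_def)

lemma detect_first_hit:
  assumes "e \<in> s (\<sigma> (t + h))"
  obtains l where "l \<le> h" "e \<in> s (\<sigma> (t + l))" "detect s e \<sigma> t = of_nat (Suc l)"
proof
  let ?l = "LEAST l. e \<in> s (\<sigma> (t + l))"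
  show "?l \<le> h" "e \<in> s (\<sigma> (t + ?l))" using assms by (auto intro: Least_le LeastI)
  show "detect s e \<sigma> t = of_nat (Suc ?l)" using assms unfolding detect_def by auto
qed

lemma detect_eq_top_or_of_nat: "detect s e \<sigma> t = \<infinity> \<or> (\<exists>n. detect s e \<sigma> t = of_nat n)"
  unfolding detect_def by (auto simp del: of_nat_Suc)

lemma detect_hit: "e \<in> s (\<sigma> t) \<Longrightarrow> detect s e \<sigma> t = 1"
  using detect_first_hit[of e s \<sigma> t 0] by simp

lemma detect_miss:
  assumes miss: "e \<notin> s (\<sigma> t)"
  shows "detect s e \<sigma> t = detect s e \<sigma> (Suc t) + 1"
proof (cases "\<exists>h. e \<in> s (\<sigma> (t + h))")
  case True
  then obtain h where h: "e \<in> s (\<sigma> (t + h))" using True by blast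
  have "(LEAST h. e \<in> s (\<sigma> (t + h))) = Suc (LEAST h. e \<in> s (\<sigma> (t + Suc h)))"
    by (rule Least_Suc[where P="\<lambda>h. e \<in> s (\<sigma> (t + h))", OF h]) (use miss in simp)
  moreover have "\<exists>h. e \<in> s (\<sigma> (Suc t + h))"
    using h miss by (metis add.right_neutral add_Suc_shift not0_implies_Suc)
  ultimately show ?thesis unfolding detect_def using True by (simp add: ac_simps)
next
  case False
  then have "\<not> (\<exists>h. e \<in> s (\<sigma> (Suc t + h)))" by (metis add_Suc_shift)
  then show ?thesis using False unfolding detect_def by simp
qed

lemma detect_eq_INF:
  "detect s e \<sigma> t = (INF h. if e \<in> s (\<sigma> (t + h)) then of_nat (Suc h) else \<infinity>)"
proof (rule antisym)
  show "detect s e \<sigma> t \<le> (INF h. if e \<in> s (\<sigma> (t + h)) then of_nat (Suc h) else \<infinity>)"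
    by (rule INF_greatest) (use detect_le_Suc[of e s \<sigma> t] in auto)
  show "(INF h. if e \<in> s (\<sigma> (t + h)) then of_nat (Suc h) else \<infinity>) \<le> detect s e \<sigma> t"
  proof (cases "\<exists>h. e \<in> s (\<sigma> (t + h))")
    case True
    then obtain h where "e \<in> s (\<sigma> (t + h))" by blast
    then obtain l where "e \<in> s (\<sigma> (t + l))" "detect s e \<sigma> t = of_nat (Suc l)"
      by (rule detect_first_hit)
    then show ?thesis by (metis (mono_tags, lifting) INF_lower2 UNIV_I order_refl)
  qed (simp add: detect_def)
qed

lemma space_sched_space: "space (sched_space m) = {\<sigma>. \<forall>t. \<sigma> t < m}"
  unfolding sched_space_def space_PiM PiE_def Pi_def by auto

lemma measurable_sched_space_component:
  assumes "f \<in> {..<m} \<rightarrow> space N"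
  shows "(\<lambda>\<sigma>. f (\<sigma> j)) \<in> measurable (sched_space m) N"
proof -
  have component: "(\<lambda>\<sigma>. \<sigma> j) \<in> measurable (sched_space m) (count_space {..<m})"
    unfolding sched_space_def by (rule measurable_component_singleton) simp
  have "f \<in> measurable (count_space {..<m}) N"
    using assms by (simp add: measurable_count_space_eq1)
  from measurable_comp[OF component this] show ?thesis by (simp add: comp_def)
qed

lemma detect_measurable: "(\<lambda>\<sigma>. detect s e \<sigma> t) \<in> borel_measurable (sched_space m)"
  unfolding detect_eq_INF
proof (rule borel_measurable_INF)
  fix h :: nat
  show "(\<lambda>\<sigma>. if e \<in> s (\<sigma> (t + h)) then of_nat (Suc h) else \<infinity> :: ennreal) \<in> borel_measurable (sched_space m)"
    by (rule measurable_sched_space_component[where f="\<lambda>i. if e \<in> s i then of_nat (Suc h) else \<infinity>"]) simp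
qed simp

section \<open>Long-run averages of a deterministic schedule\<close>

lemma countdown_sum_telescope:
  fixes d :: "nat \<Rightarrow> real"
  assumes bound: "\<And>t. 0 \<le> d t \<and> d t \<le> G"
    and countdown: "\<And>t. d t = 1 \<or> d t = d (Suc t) + 1"
  shows "2 * (\<Sum>t<H. d t) \<le> real H + (d 0)\<^sup>2 - (d H)\<^sup>2 + G * (real H - d 0 + d H)"
proof (induction H)
  case (Suc H)
  have "2 * d H \<le> 1 + (d H)\<^sup>2 - (d (Suc H))\<^sup>2 + G * (1 + d (Suc H) - d H)"
  proof (cases "d H = 1")
    case True
    have "d (Suc H) * d (Suc H) \<le> G * d (Suc H)"
      using bound[of "Suc H"] by (intro mult_right_mono) auto
    then show ?thesis using True by (simp add: power2_eq_square algebra_simps)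
  next
    case False
    then have "d H = d (Suc H) + 1" using countdown[of H] by auto
    then show ?thesis by (simp add: power2_eq_square algebra_simps)
  qed
  then show ?case using Suc.IH by (simp add: algebra_simps)
qed simp

lemma countdown_sum_le:
  fixes d :: "nat \<Rightarrow> real"
  assumes bound: "\<And>t. 0 \<le> d t \<and> d t \<le> G"
    and countdown: "\<And>t. d t = 1 \<or> d t = d (Suc t) + 1"
  shows "2 * (\<Sum>t<H. d t) \<le> real H * (G + 1) + 2 * G\<^sup>2"
proof -
  have "(d 0)\<^sup>2 \<le> G\<^sup>2" using bound[of 0] by (intro power_mono) auto
  moreover have "G * (real H - d 0 + d H) \<le> G * (real H + G)"
    using bound[of 0] bound[of H] by (intro mult_left_mono) auto
  moreover have "0 \<le> G * d 0" using bound[of 0] bound[of H] by auto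
  ultimately show ?thesis
    using countdown_sum_telescope[of d G, OF bound countdown, of H]
    by (simp add: algebra_simps power2_eq_square[of G]) (use zero_le_power2[of "d H"] in linarith)
qed

lemma le_Mt: "D e t \<le> Mt D e"
  unfolding Mt_def by (rule SUP_upper) simp

lemma valid_det_Mt_finite: "valid_det E m s \<sigma> \<Longrightarrow> e \<in> E \<Longrightarrow> Mt (det_D s \<sigma>) e < \<infinity>"
  unfolding valid_det_def valid_gen_def by auto

lemma valid_det_detect_finite: "valid_det E m s \<sigma> \<Longrightarrow> e \<in> E \<Longrightarrow> detect s e \<sigma> t < \<infinity>"
  using le_Mt[of "det_D s \<sigma>" e t] valid_det_Mt_finite[of E m s \<sigma> e] by (simp add: det_D_def)

lemma valid_det_Et_le:
  assumes valid: "valid_det E m s \<sigma>" and e: "e \<in> E"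
    and bound: "\<And>t. enn2real (detect s e \<sigma> t) \<le> G"
  shows "Et (det_D s \<sigma>) e \<le> (G + 1) / 2"
proof -
  define d where "d t = enn2real (detect s e \<sigma> t)" for t
  have countdown: "d t = 1 \<or> d t = d (Suc t) + 1" for t
  proof (cases "e \<in> s (\<sigma> t)")
    case False
    then have "d t = d (Suc t) + 1" using valid_det_detect_finite[OF valid e, of "Suc t"]
      by (simp add: d_def detect_miss enn2real_plus)
    then show ?thesis ..
  qed (simp add: d_def detect_hit)
  have "(\<lambda>H. (\<Sum>t<H. d t) / real H) \<longlonglongrightarrow> Et (det_D s \<sigma>) e"
    using valid e unfolding valid_det_def valid_gen_def Et_def det_D_def d_def
    by (simp add: convergent_LIMSEQ_iff)
  moreover have "(\<lambda>H. (G + 1) / 2 + G\<^sup>2 * (1 / real H)) \<longlonglongrightarrow> (G + 1) / 2 + G\<^sup>2 * 0"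
    by (intro tendsto_intros lim_inverse_n')
  moreover have "\<forall>\<^sub>F H in sequentially. (\<Sum>t<H. d t) / real H \<le> (G + 1) / 2 + G\<^sup>2 * (1 / real H)"
  proof (rule eventually_sequentiallyI[of 1])
    fix H :: nat assume "1 \<le> H"
    moreover have "2 * (\<Sum>t<H. d t) \<le> real H * (G + 1) + 2 * G\<^sup>2"
      using bound countdown by (intro countdown_sum_le) (simp add: d_def)
    ultimately show "(\<Sum>t<H. d t) / real H \<le> (G + 1) / 2 + G\<^sup>2 * (1 / real H)"
      by (simp add: field_simps)
  qed
  ultimately show ?thesis using tendsto_le[OF trivial_limit_sequentially] by fastforce
qed

lemma valid_det_EEP_le_EMP:
  assumes valid: "valid_det E m s \<sigma>" and p: "\<forall>e\<in>E. 0 \<le> p e" and p_sum: "(\<Sum>e\<in>E. p e) = 1"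
  shows "2 * EEP E p (det_D s \<sigma>) \<le> EMP E p (det_D s \<sigma>) + 1"
proof -
  let ?D = "det_D s \<sigma>"
  have "2 * (p e * Et ?D e) \<le> p e * enn2real (Mt ?D e) + p e" if e: "e \<in> E" for e
  proof -
    have "Et ?D e \<le> (enn2real (Mt ?D e) + 1) / 2"
      using le_Mt[of ?D e] valid_det_Mt_finite[OF valid e]
      by (intro valid_det_Et_le[OF valid e] enn2real_mono) (auto simp: det_D_def)
    then show ?thesis using p e mult_left_mono[of _ _ "p e"] by (fastforce simp: field_simps)
  qed
  then have "2 * EEP E p ?D \<le> (\<Sum>e\<in>E. p e * enn2real (Mt ?D e) + p e)"
    unfolding EEP_def sum_distrib_left by (rule sum_mono)
  also have "\<dots> = EMP E p ?D + 1" unfolding EMP_def using p_sum by (simp add: sum.distrib)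
  finally show ?thesis .
qed

lemma valid_det_le_WMP:
  assumes "finite E" and valid: "valid_det E m s \<sigma>" and p: "\<forall>e\<in>E. 0 \<le> p e" and "e \<in> E"
  shows "p e * enn2real (detect s e \<sigma> t) \<le> WMP E p (det_D s \<sigma>)"
proof -
  let ?D = "det_D s \<sigma>"
  have "p e * enn2real (?D e t) \<le> (\<Sum>e\<in>E. p e * enn2real (Mt ?D e))" if e: "e \<in> E" for e t
  proof -
    have "p e * enn2real (?D e t) \<le> p e * enn2real (Mt ?D e)"
      using p e le_Mt[of ?D e t] valid_det_Mt_finite[OF valid e]
      by (intro mult_left_mono enn2real_mono) auto
    also have "\<dots> \<le> (\<Sum>e\<in>E. p e * enn2real (Mt ?D e))"
      using p e \<open>finite E\<close> by (intro member_le_sum) auto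
    finally show ?thesis .
  qed
  then have "bdd_above ((\<lambda>et. p (fst et) * enn2real (?D (fst et) (snd et))) ` (E \<times> UNIV))"
    by (intro bdd_aboveI) auto
  from cSUP_upper[OF _ this, of "(e, t)"] show ?thesis
    unfolding WMP_def using \<open>e \<in> E\<close> by (simp add: det_D_def)
qed

lemma valid_det_WEP_le_WMP:
  assumes "finite E" and "E \<noteq> {}" and valid: "valid_det E m s \<sigma>"
    and p: "\<forall>e\<in>E. 0 \<le> p e" and p_max: "Max (p ` E) = 1"
  shows "2 * WEP E p (det_D s \<sigma>) \<le> WMP E p (det_D s \<sigma>) + 1"
proof -
  let ?D = "det_D s \<sigma>"
  note le_WMP = valid_det_le_WMP[OF \<open>finite E\<close> valid p]
  have "2 * (p e * Et ?D e) \<le> WMP E p ?D + 1" if e: "e \<in> E" for e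
  proof (cases "p e = 0")
    case True
    have "0 \<le> p e * enn2real (detect s e \<sigma> 0)" using p e by simp
    then show ?thesis using le_WMP[OF e, of 0] True by simp
  next
    case False
    then have pos: "0 < p e" using p e by force
    have "p e \<le> 1" using p_max \<open>finite E\<close> e by (metis Max_ge finite_imageI image_eqI)
    have "Et ?D e \<le> (WMP E p ?D / p e + 1) / 2"
      using le_WMP[OF e] pos by (intro valid_det_Et_le[OF valid e]) (simp add: field_simps)
    then have "p e * Et ?D e \<le> p e * ((WMP E p ?D / p e + 1) / 2)"
      using pos by (intro mult_left_mono) auto
    also have "\<dots> = (WMP E p ?D + p e) / 2" using pos by (simp add: field_simps)
    finally show ?thesis using \<open>p e \<le> 1\<close> by simp
  qed
  moreover have "WEP E p ?D \<in> (\<lambda>e. p e * Et ?D e) ` E"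
    unfolding WEP_def using assms by (intro Max_in) auto
  ultimately show ?thesis by auto
qed

section \<open>Deterministic schedules as Dirac schedules\<close>

lemma sched_space_pred_sets: "{\<sigma> \<in> space (sched_space m). \<sigma> t = i} \<in> sets (sched_space m)"
proof -
  have "(\<lambda>\<sigma>. \<sigma> t = i) \<in> measurable (sched_space m) (count_space UNIV)"
    by (rule measurable_sched_space_component[where f="\<lambda>x. x = i"]) simp
  then show ?thesis by (simp add: pred_def[symmetric])
qed

lemma sto_D_return:
  "\<sigma> \<in> space (sched_space m) \<Longrightarrow> sto_D s (return (sched_space m) \<sigma>) = det_D s \<sigma>"
  unfolding sto_D_def det_D_def by (intro ext nn_integral_return detect_measurable)

lemma sto_F_return:
  "\<sigma> \<in> space (sched_space m) \<Longrightarrow> sto_F (return (sched_space m) \<sigma>) = det_F \<sigma>"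
  unfolding sto_F_def det_F_def
  by (intro ext) (simp add: measure_return sched_space_pred_sets indicator_def)

lemma valid_sto_return:
  assumes "valid_det E m s \<sigma>"
  shows "valid_sto E m s (return (sched_space m) \<sigma>)"
proof -
  have "\<sigma> \<in> space (sched_space m)" using assms unfolding valid_det_def space_sched_space by auto
  then show ?thesis using assms unfolding valid_sto_def valid_det_def
    by (simp add: prob_space_return sto_D_return sto_F_return)
qed

lemma opt_SUM_le_det:
  "valid_det E m s \<sigma> \<Longrightarrow> opt_SUM E m s p \<le> ereal (EEP E p (det_D s \<sigma>))"
  unfolding opt_SUM_def using valid_sto_return[of E m s \<sigma>]
  by (intro INF_lower2[of "return (sched_space m) \<sigma>"])
     (auto simp: sto_D_return valid_det_def space_sched_space)

lemma opt_MAX_le_det: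
  "valid_det E m s \<sigma> \<Longrightarrow> opt_MAX E m s p \<le> ereal (WEP E p (det_D s \<sigma>))"
  unfolding opt_MAX_def using valid_sto_return[of E m s \<sigma>]
  by (intro INF_lower2[of "return (sched_space m) \<sigma>"])
     (auto simp: sto_D_return valid_det_def space_sched_space)

section \<open>Periodic schedules\<close>

lemma LIMSEQ_average_periodic:
  fixes f :: "nat \<Rightarrow> real"
  assumes P: "0 < P" and periodic: "\<And>t. f (t + P) = f t"
  shows "(\<lambda>H. (\<Sum>t<H. f t) / real H) \<longlonglongrightarrow> (\<Sum>t<P. f t) / real P"
proof -
  define S where "S = (\<Sum>t<P. f t)"
  \<comment> \<open>the deviation of the partial sums from their linear trend is periodic, hence bounded\<close>
  define g where "g H = (\<Sum>t<H. f t) - real H * S / real P" for H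
  have "(\<Sum>t<H + P. f t) = (\<Sum>t<H. f t) + S" for H
    by (induction H) (simp_all add: S_def periodic)
  then have shift: "g (H + P) = g H" for H
    unfolding g_def using P by (simp add: field_simps)
  have "g (r + k * P) = g r" for r k
  proof (induction k)
    case (Suc k)
    have "r + Suc k * P = (r + k * P) + P" by simp
    then show ?case using shift Suc.IH by metis
  qed simp
  then have g_mod: "g H = g (H mod P)" for H
    by (metis mod_div_decomp add.commute)
  define B where "B = Max ((\<lambda>x. \<bar>g x\<bar>) ` {..<P})"
  have "\<bar>g H\<bar> \<le> B" for H
    unfolding g_mod[of H] B_def using P by (intro Max_ge) auto
  then have "(\<lambda>H. g H / real H) \<longlonglongrightarrow> 0"
    by (intro tendsto_0_le[OF lim_inverse_n', where K=B] always_eventually allI)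
       (simp add: divide_simps abs_divide)
  then have "(\<lambda>H. S / real P + g H / real H) \<longlonglongrightarrow> S / real P + 0"
    by (intro tendsto_add tendsto_const)
  moreover have "\<forall>\<^sub>F H in sequentially. S / real P + g H / real H = (\<Sum>t<H. f t) / real H"
    using P by (intro eventually_sequentiallyI[of 1]) (simp add: g_def field_simps)
  ultimately show ?thesis unfolding S_def using tendsto_cong by force
qed

definition periodize :: "nat \<Rightarrow> nat \<Rightarrow> (nat \<Rightarrow> nat) \<Rightarrow> nat \<Rightarrow> nat" where
  "periodize H m \<sigma> t = (if t mod (H + m) < H then \<sigma> (t mod (H + m)) else t mod (H + m) - H)"

lemma periodize_add_periods: "periodize H m \<sigma> (t + k * (H + m)) = periodize H m \<sigma> t"
  unfolding periodize_def by simp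

lemma periodize_add_period: "periodize H m \<sigma> (t + (H + m)) = periodize H m \<sigma> t"
  using periodize_add_periods[of H m \<sigma> t 1] by simp

lemma periodize_prefix: "t < H \<Longrightarrow> periodize H m \<sigma> t = \<sigma> t"
  unfolding periodize_def by simp

lemma periodize_sweep: "i < m \<Longrightarrow> periodize H m \<sigma> (H + i) = i"
  unfolding periodize_def by simp

lemma periodize_less:
  assumes "\<And>t. \<sigma> t < m"
  shows "periodize H m \<sigma> t < m"
proof -
  have "t mod (H + m) < H + m" using assms[of 0] by simp
  then show ?thesis using assms unfolding periodize_def by auto
qed

lemma detect_periodize_add_period:
  "detect s e (periodize H m \<sigma>) (t + (H + m)) = detect s e (periodize H m \<sigma>) t"
proof -
  have "periodize H m \<sigma> (t + (H + m) + h) = periodize H m \<sigma> (t + h)" for h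
    using periodize_add_period[of H m \<sigma> "t + h"] by (simp add: ac_simps)
  then show ?thesis unfolding detect_def by simp
qed

lemma detect_periodize_le_period:
  assumes "i < m" "e \<in> s i"
  shows "detect s e (periodize H m \<sigma>) t \<le> of_nat (H + m)"
proof -
  define P where "P = H + m"
  define r where "r = t mod P"
  have t: "t = r + (t div P) * P" unfolding r_def by simp
  have "r < P" unfolding r_def P_def using assms by simp
  have hit: "e \<in> s (periodize H m \<sigma> (H + i + k * P))" for k
    using periodize_add_periods[of H m \<sigma> "H + i" k] periodize_sweep[of i m H \<sigma>] assms
    unfolding P_def by simp
  show ?thesis
  proof (cases "r \<le> H + i")
    case True
    have "t + (H + i - r) = H + i + (t div P) * P" using t True by simp
    then have "detect s e (periodize H m \<sigma>) t \<le> of_nat (Suc (H + i - r))"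
      using hit by (intro detect_le_Suc) metis
    also have "\<dots> \<le> of_nat (H + m)" using assms True by (simp only: of_nat_le_iff)
    finally show ?thesis .
  next
    case False
    have "t + (P - r + H + i) = H + i + Suc (t div P) * P" using t \<open>r < P\<close> by simp
    then have "detect s e (periodize H m \<sigma>) t \<le> of_nat (Suc (P - r + H + i))"
      using hit by (intro detect_le_Suc) metis
    also have "\<dots> \<le> of_nat (H + m)"
      using assms False \<open>r < P\<close> unfolding P_def by (simp only: of_nat_le_iff)
    finally show ?thesis .
  qed
qed

lemma amortized_overshoot_le:
  fixes a n m K :: nat
  assumes "a < n"
  shows "K * (a + m) \<le> Suc K * n + (if a < m * K then K * m else 0)"
proof (cases "a < m * K")
  case True
  have "K * (a + m) \<le> K * n + K * m" using assms by (simp add: add_mult_distrib2)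
  then show ?thesis using True by simp
next
  case False
  then have "K * m \<le> n" using assms by (simp add: mult.commute)
  then have "K * (a + m) \<le> K * n + n" using assms by (simp add: add_mult_distrib2 add_mono)
  then show ?thesis using False by simp
qed

lemma detect_periodize_prefix_le:
  assumes "i < m" "e \<in> s i" "t < H"
  shows "of_nat K * detect s e (periodize H m \<sigma>) t
     \<le> of_nat (Suc K) * detect s e \<sigma> t + of_nat (if H - t < m * K then K * m else 0)"
proof (cases "\<exists>h<H - t. e \<in> s (\<sigma> (t + h))")
  case True
  then obtain h where "h < H - t" "e \<in> s (\<sigma> (t + h))" by blast
  from \<open>e \<in> s (\<sigma> (t + h))\<close> obtain l
    where "l \<le> h" and hit: "e \<in> s (\<sigma> (t + l))" and detect_eq: "detect s e \<sigma> t = of_nat (Suc l)"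
    by (rule detect_first_hit)
  have "periodize H m \<sigma> (t + l) = \<sigma> (t + l)"
    using \<open>l \<le> h\<close> \<open>h < H - t\<close> by (intro periodize_prefix) simp
  then have "detect s e (periodize H m \<sigma>) t \<le> detect s e \<sigma> t"
    using hit detect_le_Suc[of e s "periodize H m \<sigma>" t l] detect_eq by simp
  then have "of_nat K * detect s e (periodize H m \<sigma>) t \<le> of_nat (Suc K) * detect s e \<sigma> t"
    by (intro mult_mono) auto
  then show ?thesis by (simp add: add_increasing2)
next
  case False
  then have lower: "of_nat (Suc (H - t)) \<le> detect s e \<sigma> t"
    by (intro Suc_le_detect) auto
  have "t + (H + i - t) = H + i" using assms by simp
  then have "e \<in> s (periodize H m \<sigma> (t + (H + i - t)))"
    using periodize_sweep[of i m H \<sigma>] assms by simp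
  then have "detect s e (periodize H m \<sigma>) t \<le> of_nat (Suc (H + i - t))"
    by (rule detect_le_Suc)
  also have "\<dots> \<le> of_nat (H - t + m)" using assms by (simp only: of_nat_le_iff)
  finally have upper: "detect s e (periodize H m \<sigma>) t \<le> of_nat (H - t + m)" .
  show ?thesis
  proof (cases "detect s e \<sigma> t = \<infinity>")
    case False
    then obtain n where n: "detect s e \<sigma> t = of_nat n" using detect_eq_top_or_of_nat[of s e \<sigma> t] by blast
    have "Suc (H - t) \<le> n" using lower unfolding n by (simp only: of_nat_le_iff)
    have "of_nat K * detect s e (periodize H m \<sigma>) t \<le> of_nat K * (of_nat (H - t + m) :: ennreal)"
      using upper by (rule mult_left_mono) simp
    also have "\<dots> = of_nat (K * (H - t + m))" by (simp only: of_nat_mult)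
    also have "\<dots> \<le> of_nat (Suc K * n + (if H - t < m * K then K * m else 0))"
      using amortized_overshoot_le[of "H - t" n K m] \<open>Suc (H - t) \<le> n\<close>
      by (simp only: of_nat_le_iff)
    also have "\<dots> = of_nat (Suc K) * detect s e \<sigma> t + of_nat (if H - t < m * K then K * m else 0)"
      unfolding n by (simp only: of_nat_add of_nat_mult)
    finally show ?thesis .
  qed (simp add: ennreal_mult_top)
qed

lemma detect_periodize_sweep_le:
  assumes "i < m" "e \<in> s i" "H \<le> t" "t < H + m"
  shows "detect s e (periodize H m \<sigma>) t \<le> of_nat m + detect s e \<sigma> 0"
proof (cases "\<exists>h<H. e \<in> s (\<sigma> h)")
  case True
  then obtain h where "h < H" "e \<in> s (\<sigma> (0 + h))" by auto
  from \<open>e \<in> s (\<sigma> (0 + h))\<close> obtain l where "l \<le> h" and hit: "e \<in> s (\<sigma> (0 + l))"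
    and detect_eq: "detect s e \<sigma> 0 = of_nat (Suc l)"
    by (rule detect_first_hit)
  have "periodize H m \<sigma> (l + (H + m)) = \<sigma> l"
    using periodize_add_period[of H m \<sigma> l] periodize_prefix[of l H m \<sigma>] \<open>l \<le> h\<close> \<open>h < H\<close> by simp
  moreover have "t + (H + m + l - t) = l + (H + m)" using assms by simp
  ultimately have "e \<in> s (periodize H m \<sigma> (t + (H + m + l - t)))" using hit by simp
  then have "detect s e (periodize H m \<sigma>) t \<le> of_nat (Suc (H + m + l - t))" by (rule detect_le_Suc)
  also have "\<dots> \<le> of_nat (m + Suc l)" using assms by (simp only: of_nat_le_iff)
  also have "\<dots> = of_nat m + detect s e \<sigma> 0" unfolding detect_eq by (simp only: of_nat_add)
  finally show ?thesis .
next
  case False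
  then have lower: "of_nat (Suc H) \<le> detect s e \<sigma> 0" by (intro Suc_le_detect) auto
  have "detect s e (periodize H m \<sigma>) t \<le> of_nat (H + m)"
    using assms by (intro detect_periodize_le_period)
  also have "\<dots> \<le> of_nat m + (of_nat (Suc H) :: ennreal)" by (simp del: of_nat_Suc)
  also have "\<dots> \<le> of_nat m + detect s e \<sigma> 0" using lower by (rule add_left_mono)
  finally show ?thesis .
qed

lemma sum_if_last_le: "(\<Sum>t<H. if H - t < c then a else 0) \<le> a * (c :: nat)"
proof -
  have "(\<Sum>t<H. if H - t < c then a else 0) = (\<Sum>t\<in>{H - c..<H}. if H - t < c then a else 0)"
    by (rule sum.mono_neutral_right) auto
  also have "\<dots> \<le> (\<Sum>t\<in>{H - c..<H}. a)" by (rule sum_mono) simp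
  also have "\<dots> = a * (H - (H - c))" by simp
  also have "\<dots> \<le> a * c" by (intro mult_le_mono2) simp
  finally show ?thesis .
qed

lemma detect_periodize_sum_le:
  assumes "i < m" "e \<in> s i"
  shows "of_nat K * (\<Sum>t<H + m. detect s e (periodize H m \<sigma>) t)
    \<le> of_nat (Suc K) * (\<Sum>t<H. detect s e \<sigma> t) + of_nat (K * m * (m * K) + K * m * m)
       + of_nat (K * m) * detect s e \<sigma> 0"
proof -
  let ?\<tau> = "periodize H m \<sigma>"
  let ?c = "\<lambda>t. if H - t < m * K then K * m else 0"
  have "of_nat K * (\<Sum>t<H. detect s e ?\<tau> t) = (\<Sum>t<H. of_nat K * detect s e ?\<tau> t)"
    by (simp add: sum_distrib_left)
  also have "\<dots> \<le> (\<Sum>t<H. of_nat (Suc K) * detect s e \<sigma> t + of_nat (?c t))"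
    using assms by (intro sum_mono detect_periodize_prefix_le) auto
  also have "\<dots> = of_nat (Suc K) * (\<Sum>t<H. detect s e \<sigma> t) + of_nat (\<Sum>t<H. ?c t)"
    by (simp add: sum.distrib sum_distrib_left del: of_nat_Suc)
  also have "of_nat (\<Sum>t<H. ?c t) \<le> (of_nat (K * m * (m * K)) :: ennreal)"
    using sum_if_last_le[of H "m * K" "K * m"] by (simp only: of_nat_le_iff)
  finally have prefix: "of_nat K * (\<Sum>t<H. detect s e ?\<tau> t)
      \<le> of_nat (Suc K) * (\<Sum>t<H. detect s e \<sigma> t) + of_nat (K * m * (m * K))"
    by (simp add: add_left_mono)
  have "(\<Sum>t\<in>{H..<H + m}. detect s e ?\<tau> t) \<le> (\<Sum>t\<in>{H..<H + m}. of_nat m + detect s e \<sigma> 0)"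
    using assms by (intro sum_mono detect_periodize_sweep_le) auto
  then have "of_nat K * (\<Sum>t\<in>{H..<H + m}. detect s e ?\<tau> t)
      \<le> of_nat K * (of_nat m * (of_nat m + detect s e \<sigma> 0))"
    by (intro mult_left_mono) auto
  also have "\<dots> = of_nat (K * m * m) + of_nat (K * m) * detect s e \<sigma> 0"
    by (simp add: algebra_simps)
  finally have sweep: "of_nat K * (\<Sum>t\<in>{H..<H + m}. detect s e ?\<tau> t)
      \<le> of_nat (K * m * m) + of_nat (K * m) * detect s e \<sigma> 0" .
  have "{..<H + m} = {..<H} \<union> {H..<H + m}" by auto
  then have "of_nat K * (\<Sum>t<H + m. detect s e ?\<tau> t)
     = of_nat K * (\<Sum>t<H. detect s e ?\<tau> t) + of_nat K * (\<Sum>t\<in>{H..<H + m}. detect s e ?\<tau> t)"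
    by (simp add: sum.union_disjoint ivl_disj_int distrib_left)
  also have "\<dots> \<le> (of_nat (Suc K) * (\<Sum>t<H. detect s e \<sigma> t) + of_nat (K * m * (m * K)))
      + (of_nat (K * m * m) + of_nat (K * m) * detect s e \<sigma> 0)"
    by (rule add_mono[OF prefix sweep])
  finally show ?thesis by (simp only: of_nat_add add.assoc)
qed

lemma
  assumes "\<And>t. \<sigma> t < m" and covered: "\<And>e. e \<in> E \<Longrightarrow> \<exists>i<m. e \<in> s i"
  shows valid_det_periodize: "valid_det E m s (periodize H m \<sigma>)"
    and Et_periodize: "e \<in> E \<Longrightarrow> Et (det_D s (periodize H m \<sigma>)) e
        = (\<Sum>t<H + m. enn2real (detect s e (periodize H m \<sigma>) t)) / real (H + m)"
proof -
  let ?\<tau> = "periodize H m \<sigma>"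
  have period: "0 < H + m" using assms(1)[of 0] by simp
  have average: "(\<lambda>H'. (\<Sum>t<H'. enn2real (det_D s ?\<tau> e t)) / real H') \<longlonglongrightarrow>
       (\<Sum>t<H + m. enn2real (detect s e ?\<tau> t)) / real (H + m)" for e
    using LIMSEQ_average_periodic[OF period] by (simp add: det_D_def detect_periodize_add_period)
  then show "e \<in> E \<Longrightarrow> Et (det_D s ?\<tau>) e
        = (\<Sum>t<H + m. enn2real (detect s e ?\<tau> t)) / real (H + m)"
    unfolding Et_def by (simp add: limI)
  have Mt_finite: "Mt (det_D s ?\<tau>) e < \<infinity>" if e: "e \<in> E" for e
  proof -
    obtain i where "i < m" "e \<in> s i" using covered[OF e] by blast
    then have "Mt (det_D s ?\<tau>) e \<le> of_nat (H + m)"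
      unfolding Mt_def det_D_def by (intro SUP_least detect_periodize_le_period)
    from le_less_trans[OF this of_nat_less_top] show ?thesis by simp
  qed
  have frequency: "convergent (\<lambda>H'. (\<Sum>t<H'. det_F ?\<tau> i t) / real H')" for i
  proof -
    have "det_F ?\<tau> i (t + (H + m)) = det_F ?\<tau> i t" for t
      unfolding det_F_def by (simp only: periodize_add_period)
    from LIMSEQ_average_periodic[OF period, of "det_F ?\<tau> i", OF this] show ?thesis
      unfolding convergent_def by blast
  qed
  show "valid_det E m s ?\<tau>"
    unfolding valid_det_def valid_gen_def
  proof (intro conjI ballI allI impI)
    show "?\<tau> t < m" for t using assms(1) by (rule periodize_less)
    show "convergent (\<lambda>H. (\<Sum>t<H. enn2real (det_D s ?\<tau> e t)) / real H)" for e
      using average[of e] unfolding convergent_def by blast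
  qed (use Mt_finite frequency in auto)
qed

section \<open>Derandomization\<close>

lemma valid_sto_space: "valid_sto E m s M \<Longrightarrow> space M = space (sched_space m)"
  unfolding valid_sto_def by (metis sets_eq_imp_space_eq)

lemma valid_sto_measurable:
  "valid_sto E m s M \<Longrightarrow> f \<in> borel_measurable (sched_space m) \<Longrightarrow> f \<in> borel_measurable M"
  unfolding valid_sto_def using measurable_cong_sets by blast

lemma valid_sto_sto_D_finite: "valid_sto E m s M \<Longrightarrow> e \<in> E \<Longrightarrow> sto_D s M e t < \<infinity>"
  unfolding valid_sto_def valid_gen_def using le_Mt[of "sto_D s M" e t] by fastforce

lemma valid_sto_covers:
  assumes valid: "valid_sto E m s M" and e: "e \<in> E"
  shows "\<exists>i<m. e \<in> s i"
proof (rule ccontr)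
  assume "\<not> (\<exists>i<m. e \<in> s i)"
  then have "detect s e \<sigma> 0 = \<infinity>" if "\<sigma> \<in> space M" for \<sigma>
    using that valid_sto_space[OF valid] unfolding space_sched_space detect_def by auto
  then have "sto_D s M e 0 = \<infinity> * emeasure M (space M)"
    unfolding sto_D_def by (simp add: nn_integral_cong)
  also have "\<dots> = \<infinity>"
    using valid unfolding valid_sto_def by (simp add: prob_space.emeasure_space_1)
  finally show False using valid_sto_sto_D_finite[OF valid e, of 0] by simp
qed

lemma prob_space_exists_le_nn_integral:
  assumes "prob_space M"
  shows "\<exists>x\<in>space M. f x \<le> (\<integral>\<^sup>+ x. f x \<partial>M) + 1"
proof (rule ccontr)
  let ?I = "\<integral>\<^sup>+ x. f x \<partial>M"
  assume "\<not> ?thesis"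
  then have above: "?I + 1 < f x" if "x \<in> space M" for x using that by (auto simp: not_le)
  have "(\<integral>\<^sup>+ x. (?I + 1) \<partial>M) \<le> ?I"
    using above by (intro nn_integral_mono less_imp_le)
  then have "?I + 1 \<le> ?I" using prob_space.emeasure_space_1[OF assms] by simp
  moreover obtain x where "x \<in> space M" using prob_space.not_empty[OF assms] by blast
  then have "?I \<noteq> \<infinity>" using above by fastforce
  ultimately show False by (simp add: ennreal_add_left_cancel_le less_top)
qed

lemma nn_integral_detect_affine:
  assumes valid: "valid_sto E m s M"
  shows "(\<integral>\<^sup>+ \<sigma>. of_nat a * (\<Sum>t<H. detect s e \<sigma> t) + of_nat c + of_nat b * detect s e \<sigma> 0 \<partial>M)
     = of_nat a * (\<Sum>t<H. sto_D s M e t) + of_nat c + of_nat b * sto_D s M e 0"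
proof -
  have [measurable]: "(\<lambda>\<sigma>. detect s e \<sigma> t) \<in> borel_measurable M" for t
    using valid detect_measurable by (rule valid_sto_measurable)
  have "(\<integral>\<^sup>+ \<sigma>. of_nat a * (\<Sum>t<H. detect s e \<sigma> t) + of_nat c + of_nat b * detect s e \<sigma> 0 \<partial>M)
     = of_nat a * (\<integral>\<^sup>+ \<sigma>. (\<Sum>t<H. detect s e \<sigma> t) \<partial>M) + (\<integral>\<^sup>+ \<sigma>. of_nat c \<partial>M)
       + of_nat b * (\<integral>\<^sup>+ \<sigma>. detect s e \<sigma> 0 \<partial>M)"
    by (simp add: nn_integral_add nn_integral_cmult)
  also have "(\<integral>\<^sup>+ \<sigma>. (\<Sum>t<H. detect s e \<sigma> t) \<partial>M) = (\<Sum>t<H. sto_D s M e t)"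
    unfolding sto_D_def by (rule nn_integral_sum) measurable
  also have "(\<integral>\<^sup>+ \<sigma>. of_nat c \<partial>M) = of_nat c"
    using valid unfolding valid_sto_def by (simp add: prob_space.emeasure_space_1)
  finally show ?thesis by (simp add: sto_D_def)
qed

lemma exists_sample_periodize_le:
  assumes "finite E" and valid: "valid_sto E m s M"
  shows "\<exists>\<sigma>. (\<forall>t. \<sigma> t < m) \<and>
    (\<Sum>e\<in>E. ennreal (p e) * (of_nat K * (\<Sum>t<H + m. detect s e (periodize H m \<sigma>) t)))
      \<le> (\<Sum>e\<in>E. ennreal (p e) * (of_nat (Suc K) * (\<Sum>t<H. sto_D s M e t)
            + of_nat (K * m * (m * K) + K * m * m) + of_nat (K * m) * sto_D s M e 0)) + 1"
proof -
  define R where "R \<sigma> = (\<Sum>e\<in>E. ennreal (p e) * (of_nat (Suc K) * (\<Sum>t<H. detect s e \<sigma> t)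
     + of_nat (K * m * (m * K) + K * m * m) + of_nat (K * m) * detect s e \<sigma> 0))" for \<sigma>
  have [measurable]: "(\<lambda>\<sigma>. detect s e \<sigma> t) \<in> borel_measurable M" for e t
    using valid detect_measurable by (rule valid_sto_measurable)
  obtain \<sigma> where \<sigma>: "\<sigma> \<in> space M" and below: "R \<sigma> \<le> (\<integral>\<^sup>+ x. R x \<partial>M) + 1"
    using valid prob_space_exists_le_nn_integral unfolding valid_sto_def by blast
  have integral: "(\<integral>\<^sup>+ x. R x \<partial>M) = (\<Sum>e\<in>E. ennreal (p e) * (of_nat (Suc K) * (\<Sum>t<H. sto_D s M e t)
            + of_nat (K * m * (m * K) + K * m * m) + of_nat (K * m) * sto_D s M e 0))"
    unfolding R_def using nn_integral_detect_affine[OF valid]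
    by (simp add: nn_integral_sum nn_integral_cmult del: of_nat_Suc of_nat_add of_nat_mult)
  have sample: "(\<Sum>e\<in>E. ennreal (p e) * (of_nat K * (\<Sum>t<H + m. detect s e (periodize H m \<sigma>) t)))
      \<le> R \<sigma>"
    unfolding R_def
  proof (rule sum_mono)
    fix e assume "e \<in> E"
    then obtain i where "i < m" "e \<in> s i" using valid_sto_covers[OF valid] by blast
    then show "ennreal (p e) * (of_nat K * (\<Sum>t<H + m. detect s e (periodize H m \<sigma>) t))
      \<le> ennreal (p e) * (of_nat (Suc K) * (\<Sum>t<H. detect s e \<sigma> t)
        + of_nat (K * m * (m * K) + K * m * m) + of_nat (K * m) * detect s e \<sigma> 0)"
      by (intro mult_left_mono detect_periodize_sum_le) simp_all
  qed
  have "\<forall>t. \<sigma> t < m" using \<sigma> valid_sto_space[OF valid] by (simp add: space_sched_space)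
  moreover have "(\<Sum>e\<in>E. ennreal (p e) * (of_nat K * (\<Sum>t<H + m. detect s e (periodize H m \<sigma>) t)))
      \<le> (\<integral>\<^sup>+ x. R x \<partial>M) + 1"
    using sample below by (rule order_trans)
  ultimately show ?thesis unfolding integral by blast
qed

lemma ennreal_affine_combination:
  assumes "0 \<le> p" "\<And>t. 0 \<le> f t" "0 \<le> z"
  shows "ennreal p * (of_nat a * (\<Sum>t<H. ennreal (f t)) + of_nat c + of_nat b * ennreal z)
     = ennreal (p * (real a * (\<Sum>t<H. f t) + real c + real b * z))"
  using assms
  by (simp add: sum_ennreal ennreal_of_nat_eq_real_of_nat ennreal_mult'' ennreal_plus sum_nonneg)

lemma sum_affine_ennreal_eq:
  fixes D :: "'e \<Rightarrow> nat \<Rightarrow> ennreal"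
  assumes p: "\<forall>e\<in>E. 0 \<le> p e" and finite: "\<And>e t. e \<in> E \<Longrightarrow> D e t < \<infinity>"
  shows "(\<Sum>e\<in>E. ennreal (p e) * (of_nat a * (\<Sum>t<H. D e t) + of_nat c + of_nat b * D e 0))
    = ennreal (\<Sum>e\<in>E. p e * (real a * (\<Sum>t<H. enn2real (D e t)) + real c + real b * enn2real (D e 0)))"
proof -
  define d where "d e t = enn2real (D e t)" for e t
  have D_eq: "D e t = ennreal (d e t)" if "e \<in> E" for e t
    using finite[OF that] by (simp add: d_def ennreal_enn2real)
  have "(\<Sum>e\<in>E. ennreal (p e) * (of_nat a * (\<Sum>t<H. D e t) + of_nat c + of_nat b * D e 0))
    = (\<Sum>e\<in>E. ennreal (p e * (real a * (\<Sum>t<H. d e t) + real c + real b * d e 0)))"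
  proof (rule sum.cong[OF refl])
    fix e assume "e \<in> E"
    then show "ennreal (p e) * (of_nat a * (\<Sum>t<H. D e t) + of_nat c + of_nat b * D e 0)
      = ennreal (p e * (real a * (\<Sum>t<H. d e t) + real c + real b * d e 0))"
      unfolding D_eq[OF \<open>e \<in> E\<close>] using p by (intro ennreal_affine_combination) (auto simp: d_def)
  qed
  also have "\<dots> = ennreal (\<Sum>e\<in>E. p e * (real a * (\<Sum>t<H. d e t) + real c + real b * d e 0))"
    using p by (intro sum_ennreal) (auto simp: d_def intro!: mult_nonneg_nonneg add_nonneg_nonneg sum_nonneg)
  finally show ?thesis unfolding d_def .
qed

lemma optD_EEP_le_sample_bound:
  assumes "finite E" and p: "\<forall>e\<in>E. 0 \<le> p e" and valid: "valid_sto E m s M"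
    and "0 < K" "0 < H"
  shows "optD EEP E m s p \<le> ereal (((\<Sum>e\<in>E. p e * (real (Suc K) * (\<Sum>t<H. enn2real (sto_D s M e t))
      + real (K * m * (m * K) + K * m * m) + real (K * m) * enn2real (sto_D s M e 0))) + 1)
      / (real K * real H))"
    (is "_ \<le> ereal ((?Q + 1) / _)")
proof -
  obtain \<sigma> where "\<forall>t. \<sigma> t < m" and sample:
    "(\<Sum>e\<in>E. ennreal (p e) * (of_nat K * (\<Sum>t<H + m. detect s e (periodize H m \<sigma>) t)))
      \<le> (\<Sum>e\<in>E. ennreal (p e) * (of_nat (Suc K) * (\<Sum>t<H. sto_D s M e t)
            + of_nat (K * m * (m * K) + K * m * m) + of_nat (K * m) * sto_D s M e 0)) + 1"
    using exists_sample_periodize_le[OF \<open>finite E\<close> valid] by blast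
  let ?\<tau> = "periodize H m \<sigma>"
  let ?S = "\<Sum>e\<in>E. p e * (real K * (\<Sum>t<H + m. enn2real (detect s e ?\<tau> t)))"
  have covered: "\<And>e. e \<in> E \<Longrightarrow> \<exists>i<m. e \<in> s i" using valid by (rule valid_sto_covers)
  have valid_\<tau>: "valid_det E m s ?\<tau>"
    using \<open>\<forall>t. \<sigma> t < m\<close> covered by (intro valid_det_periodize) auto
  have "(\<Sum>e\<in>E. ennreal (p e) * (of_nat K * (\<Sum>t<H + m. detect s e ?\<tau> t))) = ennreal ?S"
    using sum_affine_ennreal_eq[OF p, of "\<lambda>e t. detect s e ?\<tau> t" K "H + m" 0 0]
      valid_det_detect_finite[OF valid_\<tau>] by simp
  moreover have "(\<Sum>e\<in>E. ennreal (p e) * (of_nat (Suc K) * (\<Sum>t<H. sto_D s M e t)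
      + of_nat (K * m * (m * K) + K * m * m) + of_nat (K * m) * sto_D s M e 0)) = ennreal ?Q"
    by (rule sum_affine_ennreal_eq) (use p valid_sto_sto_D_finite[OF valid] in auto)
  moreover have "0 \<le> ?Q" using p by (auto intro!: sum_nonneg mult_nonneg_nonneg add_nonneg_nonneg)
  ultimately have "ennreal ?S \<le> ennreal (?Q + 1)"
    using sample by (simp add: ennreal_plus)
  with \<open>0 \<le> ?Q\<close> have "?S \<le> ?Q + 1" by (simp add: ennreal_le_iff del: ennreal_plus)
  have "EEP E p (det_D s ?\<tau>) = ?S / (real K * real (H + m))"
    unfolding EEP_def sum_divide_distrib using \<open>0 < K\<close> Et_periodize[of \<sigma> m E s] covered \<open>\<forall>t. \<sigma> t < m\<close>
    by (intro sum.cong refl) simp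
  also have "\<dots> \<le> (?Q + 1) / (real K * real (H + m))"
    using \<open>?S \<le> ?Q + 1\<close> by (intro divide_right_mono) auto
  also have "\<dots> \<le> (?Q + 1) / (real K * real H)"
    using \<open>0 \<le> ?Q\<close> \<open>0 < K\<close> \<open>0 < H\<close> by (intro divide_left_mono mult_left_mono mult_pos_pos) auto
  finally show ?thesis
    unfolding optD_def using valid_\<tau> by (intro INF_lower2[of ?\<tau>]) auto
qed

lemma ereal_le_LIMSEQ:
  assumes "f \<longlonglongrightarrow> L" and "\<And>n. N \<le> n \<Longrightarrow> x \<le> ereal (f n)"
  shows "x \<le> ereal L"
  using LIMSEQ_le_const[OF tendsto_ereal[OF assms(1)]] assms(2) by blast

lemma optD_EEP_le_EEP_sto:
  assumes "finite E" and p: "\<forall>e\<in>E. 0 \<le> p e" and valid: "valid_sto E m s M"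
  shows "optD EEP E m s p \<le> ereal (EEP E p (sto_D s M))"
proof -
  define d where "d e t = enn2real (sto_D s M e t)" for e t
  define X where "X = EEP E p (sto_D s M)"
  define A where "A H = (\<Sum>e\<in>E. p e * (\<Sum>t<H. d e t)) / real H" for H
  have "(\<lambda>H. (\<Sum>t<H. d e t) / real H) \<longlonglongrightarrow> Et (sto_D s M) e" if "e \<in> E" for e
    using valid that unfolding valid_sto_def valid_gen_def Et_def d_def
    by (simp add: convergent_LIMSEQ_iff)
  then have "(\<lambda>H. \<Sum>e\<in>E. p e * ((\<Sum>t<H. d e t) / real H)) \<longlonglongrightarrow> X"
    unfolding X_def EEP_def by (intro tendsto_sum tendsto_mult_left)
  moreover have "A = (\<lambda>H. \<Sum>e\<in>E. p e * ((\<Sum>t<H. d e t) / real H))"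
    unfolding A_def by (intro ext, subst sum_divide_distrib) simp
  ultimately have average: "A \<longlonglongrightarrow> X" by simp
  have overhead: "optD EEP E m s p \<le> ereal (real (Suc K) / real K * X)" if "0 < K" for K
  proof -
    define c where "c = ((\<Sum>e\<in>E. p e * (real (K * m * (m * K) + K * m * m) + real (K * m) * d e 0)) + 1)
      / real K"
    have "(\<lambda>H. real (Suc K) / real K * A H + c * (1 / real H))
        \<longlonglongrightarrow> real (Suc K) / real K * X + c * 0"
      by (intro tendsto_intros average lim_inverse_n')
    then have limit: "(\<lambda>H. real (Suc K) / real K * A H + c * (1 / real H))
        \<longlonglongrightarrow> real (Suc K) / real K * X" by simp
    have bound: "optD EEP E m s p \<le> ereal (real (Suc K) / real K * A H + c * (1 / real H))"
      if "1 \<le> H" for H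
    proof -
      let ?S = "\<Sum>e\<in>E. p e * (\<Sum>t<H. d e t)"
      let ?R = "\<Sum>e\<in>E. p e * (real (K * m * (m * K) + K * m * m) + real (K * m) * d e 0)"
      have "0 < H" using that by simp
      have split: "(\<Sum>e\<in>E. p e * (real (Suc K) * (\<Sum>t<H. d e t) + real (K * m * (m * K) + K * m * m)
            + real (K * m) * d e 0)) = real (Suc K) * ?S + ?R"
        by (simp add: sum.distrib sum_distrib_left algebra_simps)
      have rearrange: "real (Suc K) / real K * A H + c * (1 / real H)
          = (real (Suc K) * ?S + ?R + 1) / (real K * real H)"
        unfolding A_def c_def using \<open>0 < K\<close> \<open>0 < H\<close> by (simp add: field_simps)
      have "optD EEP E m s p \<le> ereal (((\<Sum>e\<in>E. p e * (real (Suc K) * (\<Sum>t<H. d e t)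
          + real (K * m * (m * K) + K * m * m) + real (K * m) * d e 0)) + 1) / (real K * real H))"
        using optD_EEP_le_sample_bound[OF assms \<open>0 < K\<close> \<open>0 < H\<close>] unfolding d_def .
      then show ?thesis unfolding rearrange split .
    qed
    from limit bound show ?thesis by (rule ereal_le_LIMSEQ)
  qed
  have "(\<lambda>K. X + X * (1 / real K)) \<longlonglongrightarrow> X + X * 0"
    by (intro tendsto_intros lim_inverse_n')
  then have limit: "(\<lambda>K. X + X * (1 / real K)) \<longlonglongrightarrow> X" by simp
  have "optD EEP E m s p \<le> ereal (X + X * (1 / real K))" if "1 \<le> K" for K
  proof -
    have "real (Suc K) / real K * X = X + X * (1 / real K)" using that by (simp add: field_simps)
    then show ?thesis using overhead[of K] that by simp
  qed
  with limit show ?thesis unfolding X_def by (rule ereal_le_LIMSEQ)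
qed

lemma ereal_double_minus_one_le: "x \<le> ereal a \<Longrightarrow> 2 * a \<le> b + 1 \<Longrightarrow> 2 * x - 1 \<le> ereal b"
  by (cases x) (auto simp: one_ereal_def)

theorem lemma4:
  fixes E :: "'e set" and m :: nat and s :: "nat \<Rightarrow> 'e set" and p :: "'e \<Rightarrow> real"
  assumes "finite E"
    and "\<forall>i<m. s i \<subseteq> E"
    and "\<forall>e\<in>E. p e \<ge> 0"
  shows "((\<Sum>e\<in>E. p e) = 1 \<longrightarrow>
            optD EEP E m s p = opt_SUM E m s p \<and>
            optD EMP E m s p \<ge> 2 * opt_SUM E m s p - 1) \<and>
         (E \<noteq> {} \<and> Max (p ` E) = 1 \<longrightarrow>
            optD WMP E m s p \<ge> 2 * opt_MAX E m s p - 1)"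
proof (intro conjI impI)
  assume p_sum: "(\<Sum>e\<in>E. p e) = 1"
  show "optD EEP E m s p = opt_SUM E m s p"
  proof (rule antisym)
    show "optD EEP E m s p \<le> opt_SUM E m s p"
      unfolding opt_SUM_def using assms(1,3) by (auto intro: INF_greatest optD_EEP_le_EEP_sto)
    show "opt_SUM E m s p \<le> optD EEP E m s p"
      unfolding optD_def by (auto intro: INF_greatest opt_SUM_le_det)
  qed
  show "2 * opt_SUM E m s p - 1 \<le> optD EMP E m s p"
    unfolding optD_def
  proof (rule INF_greatest)
    fix \<sigma> assume "\<sigma> \<in> {\<sigma>. valid_det E m s \<sigma>}"
    then have valid: "valid_det E m s \<sigma>" by simp
    show "2 * opt_SUM E m s p - 1 \<le> ereal (EMP E p (det_D s \<sigma>))"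
      using opt_SUM_le_det[OF valid] valid_det_EEP_le_EMP[OF valid assms(3) p_sum]
      by (rule ereal_double_minus_one_le)
  qed
next
  assume "E \<noteq> {} \<and> Max (p ` E) = 1"
  then show "2 * opt_MAX E m s p - 1 \<le> optD WMP E m s p"
    unfolding optD_def
  proof (intro INF_greatest, elim conjE)
    fix \<sigma> assume "\<sigma> \<in> {\<sigma>. valid_det E m s \<sigma>}" "E \<noteq> {}" "Max (p ` E) = 1"
    then have valid: "valid_det E m s \<sigma>" by simp
    show "2 * opt_MAX E m s p - 1 \<le> ereal (WMP E p (det_D s \<sigma>))"
      using opt_MAX_le_det[OF valid] valid_det_WEP_le_WMP[OF assms(1) \<open>E \<noteq> {}\<close> valid assms(3)
          \<open>Max (p ` E) = 1\<close>]
      by (rule ereal_double_minus_one_le)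
  qed
qed

end
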